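(* Fix a context-free grammar $G=(N,\Sigma,P,S)$. Let $M=(V,E,L)$ be a finite directed edge-labeled graph with $L\subseteq\Sigma$, $E\subseteq V\times L\times V$, and no two parallel edges with the same label, and let $V_s,V_f\subseteq V$ be sets of start and final vertices. Then the worst-case running time of the GLL-based graph parsing algorithm (described in the context) run on $G$ and $M$ is $$O\left(|V|^3\cdot\max_{v\in V}\deg^+(v)\right),$$ where $\deg^+(v)$ is the out-degree of $v$ in $M$, the constants depending only on $G$.
   Context: Paths and queries: a path in $M$ is a sequence of edges $(v_0,l_0,v_1),(v_1,l_1,v_2),\dots,(v_{n-1},l_{n-1},v_n)$ with $n\ge 1$; its word is $l_0l_1\cdots l_{n-1}$. The algorithm builds a representation of all paths $p$ from a vertex of $V_s$ to a vertex of $V_f$ whose word belongs to $\mathcal{L}(G)$. The GLL-based graph parsing algorithm: it is the table-driven generalized LL (GLL) parsing algorithm in which input positions are vertices of $M$ instead of indices into a string. A grammar slot is a production with a dot, $X\to\alpha\cdot\beta$. The algorithm maintains a graph-structured stack (GSS) whose nodes are labeled by pairs (grammar slot, vertex); descriptors $(L,u,i,w)$ with $L$ a grammar slot, $u$ a GSS node, $i\in V$ the current position and $w$ an SPPF node (or a dummy); a working set $R$ of descriptors to process, a set $U$ of all descriptors ever created (a descriptor is added to $R$ only if it is not already in $U$), and a set $P$ of popped (GSS node, SPPF node) pairs. Initially $R$ contains one initial descriptor for each vertex in $V_s$. Processing a descriptor at slot $X\to\alpha\cdot x\beta$ at vertex $i$: if $x$ is a terminal, then for every outgoing edge $e$ of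 $i$ with label $x$, the terminal SPPF node for $e$ is created/reused, combined with the current SPPF node, and a descriptor with slot $X\to\alpha x\cdot\beta$ and position the target of $e$ is added; if $x$ is a nonterminal, a GSS node for $(X\to\alpha x\cdot\beta, i)$ is created/reused (with an edge to the current GSS node labeled by the current SPPF node), and for every slot in the union, over outgoing edges $e$ of $i$, of the LL parse-table entries for $x$ and the label of $e$, a descriptor at position $i$ is added; at a slot $X\to\alpha\cdot$ the standard GLL pop operation is performed. All other operations (add, pop, create, SPPF node construction) are those of standard GLL. The algorithm terminates when $R$ is empty. The output is a binarized Shared Packed Parse Forest (SPPF) with terminal nodes $(v_0,T,v_1)$ for edges $(v_0,T,v_1)\in E$, $\varepsilon$-nodes $(v,\varepsilon,v)$, nonterminal nodes $(v_0,A,v_1)$, intermediate nodes $(v_0,t,v_1)$ with $t$ a grammar slot, and packed nodes $(A\to\alpha\cdot\beta,v)$ (children of nonterminal/intermediate nodes, with at most two children), each node created at most once per label. *)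

theory Defs
  imports Complex_Main
begin

datatype ('n,'t) sym = NT 'n | T 't

record ('n,'t) cfg =
  Nts   :: "'n set"
  Tms   :: "'t set"
  Prods :: "('n \<times> ('n,'t) sym list) set"
  Start :: 'n

definition cfg_wf :: "('n,'t) cfg \<Rightarrow> bool" where
  "cfg_wf G \<longleftrightarrow> finite (Nts G) \<and> finite (Tms G) \<and> finite (Prods G) \<and> Start G \<in> Nts G \<and>
     (\<forall>(X,\<alpha>) \<in> Prods G. X \<in> Nts G \<and>
        (\<forall>s \<in> set \<alpha>. (case s of NT A \<Rightarrow> A \<in> Nts G | T a \<Rightarrow> a \<in> Tms G)))"

text \<open>A grammar slot X -> alpha . beta is a production together with the dot position.\<close>
type_synonym ('n,'t) slot = "('n \<times> ('n,'t) sym list) \<times> nat"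

inductive nullable :: "('n,'t) cfg \<Rightarrow> ('n,'t) sym list \<Rightarrow> bool" for G where
  nullable_Nil: "nullable G []"
| nullable_Cons: "(A,\<alpha>) \<in> Prods G \<Longrightarrow> nullable G \<alpha> \<Longrightarrow> nullable G xs \<Longrightarrow> nullable G (NT A # xs)"

inductive first :: "('n,'t) cfg \<Rightarrow> ('n,'t) sym list \<Rightarrow> 't \<Rightarrow> bool" for G where
  first_T: "first G (T a # xs) a"
| first_NT: "(A,\<alpha>) \<in> Prods G \<Longrightarrow> first G \<alpha> a \<Longrightarrow> first G (NT A # xs) a"
| first_skip: "nullable G [x] \<Longrightarrow> first G xs a \<Longrightarrow> first G (x # xs) a"

inductive follow :: "('n,'t) cfg \<Rightarrow> 'n \<Rightarrow> 't \<Rightarrow> bool" for G where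
  follow_first: "(X, \<alpha> @ NT Y # \<beta>) \<in> Prods G \<Longrightarrow> first G \<beta> a \<Longrightarrow> follow G Y a"
| follow_follow: "(X, \<alpha> @ NT Y # \<beta>) \<in> Prods G \<Longrightarrow> nullable G \<beta> \<Longrightarrow> follow G X a \<Longrightarrow> follow G Y a"

definition table :: "('n,'t) cfg \<Rightarrow> 'n \<Rightarrow> 't \<Rightarrow> ('n,'t) slot set" where
  "table G Y a = {((Y,\<alpha>),0) | \<alpha>. (Y,\<alpha>) \<in> Prods G \<and>
                    (first G \<alpha> a \<or> (nullable G \<alpha> \<and> follow G Y a))}"

definition outE :: "('v \<times> 't \<times> 'v) set \<Rightarrow> 'v \<Rightarrow> ('v \<times> 't \<times> 'v) set" where
  "outE E v = {e \<in> E. fst e = v}"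

definition outdeg :: "('v \<times> 't \<times> 'v) set \<Rightarrow> 'v \<Rightarrow> nat" where
  "outdeg E v = card (outE E v)"

definition maxdeg :: "'v set \<Rightarrow> ('v \<times> 't \<times> 'v) set \<Rightarrow> nat" where
  "maxdeg V E = Max (insert 0 (outdeg E ` V))"

text \<open>SPPF nodes: Dummy is the dummy node; terminal nodes (v0,T,v1); epsilon nodes (v,eps,v);
  nonterminal nodes (v0,A,v1); intermediate nodes (v0,t,v1) with t a slot.\<close>
datatype ('n,'t,'v) sppf =
    Dummy
  | TNode 'v 't 'v
  | ENode 'v
  | NNode 'v 'n 'v
  | INode 'v "('n,'t) slot" 'v

text \<open>Packed node: (parent, slot, pivot vertex, children).\<close>
type_synonym ('n,'t,'v) pnode = "('n,'t,'v) sppf \<times> ('n,'t) slot \<times> 'v \<times> ('n,'t,'v) sppf list"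

datatype ('n,'t,'v) gss = U0 | GNode "('n,'t) slot" 'v

text \<open>Descriptor labels: the start code label L_S (initial descriptors) or a grammar slot.\<close>
datatype ('n,'t) lab = LStart | LSlot "('n,'t) slot"

type_synonym ('n,'t,'v) desc = "('n,'t) lab \<times> ('n,'t,'v) gss \<times> 'v \<times> ('n,'t,'v) sppf"

fun lext :: "('n,'t,'v) sppf \<Rightarrow> 'v" where
  "lext (TNode a _ _) = a" | "lext (ENode a) = a" | "lext (NNode a _ _) = a"
| "lext (INode a _ _) = a" | "lext Dummy = undefined"

fun rext :: "('n,'t,'v) sppf \<Rightarrow> 'v" where
  "rext (TNode _ _ b) = b" | "rext (ENode b) = b" | "rext (NNode _ _ b) = b"
| "rext (INode _ _ b) = b" | "rext Dummy = undefined"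

text \<open>Standard binarised GLL getNodeP(X -> alpha . beta, w, z): returns the resulting node
  together with the packed node it requires (sets: nodes are created at most once per label).\<close>
definition getNodeP :: "('n,'t) cfg \<Rightarrow> ('n,'t) slot \<Rightarrow> ('n,'t,'v) sppf \<Rightarrow> ('n,'t,'v) sppf
     \<Rightarrow> ('n,'t,'v) sppf \<times> ('n,'t,'v) pnode set" where
  "getNodeP G L w z = (case L of ((X,\<gamma>),d) \<Rightarrow>
     if d = 1 \<and> d < length \<gamma> \<and> (case hd \<gamma> of T _ \<Rightarrow> True | NT A \<Rightarrow> \<not> nullable G [NT A])
     then (z, {})
     else (let k = lext z; i = rext z;
               mk = (\<lambda>j. if d = length \<gamma> then NNode j X i else INode j L i) in
           if w \<noteq> Dummy then (let y = mk (lext w) in (y, {(y, L, k, [w, z])}))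
           else (let y = mk k in (y, {(y, L, k, [z])}))))"

record ('n,'t,'v) gstate =
  R    :: "('n,'t,'v) desc set"
  U    :: "('n,'t,'v) desc set"
  Pset :: "(('n,'t,'v) gss \<times> ('n,'t,'v) sppf) set"
  GE   :: "(('n,'t,'v) gss \<times> ('n,'t,'v) sppf \<times> ('n,'t,'v) gss) set"
  SN   :: "('n,'t,'v) sppf set"
  SP   :: "('n,'t,'v) pnode set"

definition addDs :: "('n,'t,'v) desc set \<Rightarrow> ('n,'t,'v) gstate \<Rightarrow> ('n,'t,'v) gstate" where
  "addDs D st = st\<lparr>R := R st \<union> (D - U st), U := U st \<union> D\<rparr>"

definition addSPPF :: "('n,'t,'v) sppf set \<Rightarrow> ('n,'t,'v) pnode set \<Rightarrow> ('n,'t,'v) gstate \<Rightarrow> ('n,'t,'v) gstate" where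
  "addSPPF ns ps st = st\<lparr>SN := SN st \<union> ns, SP := SP st \<union> ps\<rparr>"

definition tslots :: "('n,'t) cfg \<Rightarrow> ('v \<times> 't \<times> 'v) set \<Rightarrow> 'v \<Rightarrow> 'n \<Rightarrow> (('v \<times> 't \<times> 'v) \<times> ('n,'t) slot) set" where
  "tslots G E i Y = {(e,s). e \<in> outE E i \<and> s \<in> table G Y (fst (snd e))}"

text \<open>Cost model: each primitive operation (set lookup/insert, node creation, add) is O(1);
  the cost of an action is 1 plus the number of iterations of each loop it executes.\<close>

definition popS :: "('n,'t) cfg \<Rightarrow> ('n,'t,'v) gss \<Rightarrow> 'v \<Rightarrow> ('n,'t,'v) sppf \<Rightarrow> ('n,'t,'v) gstate
    \<Rightarrow> ('n,'t,'v) gstate \<times> nat" where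
  "popS G u i z st = (case u of
      U0 \<Rightarrow> (st, 1)
    | GNode Lu k \<Rightarrow>
        (let es = {(w',v). (u,w',v) \<in> GE st} in
         (addDs {(LSlot Lu, v, i, fst (getNodeP G Lu w' z)) | w' v. (w',v) \<in> es}
            (addSPPF {fst (getNodeP G Lu w' z) | w' v. (w',v) \<in> es}
                     (\<Union>(w',v)\<in>es. snd (getNodeP G Lu w' z))
                     (st\<lparr>Pset := insert (u,z) (Pset st)\<rparr>)),
          1 + card es)))"

text \<open>Processing one descriptor (already removed from R); returns new state and cost.\<close>
definition process :: "('n,'t) cfg \<Rightarrow> ('v \<times> 't \<times> 'v) set \<Rightarrow> ('n,'t,'v) desc \<Rightarrow> ('n,'t,'v) gstate
    \<Rightarrow> ('n,'t,'v) gstate \<times> nat" where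
  "process G E d st = (case d of (lb, u, i, w) \<Rightarrow> (case lb of
     LStart \<Rightarrow>
       (addDs {(LSlot s, U0, i, Dummy) | s. \<exists>e. (e,s) \<in> tslots G E i (Start G)} st,
        1 + outdeg E i + card (tslots G E i (Start G)))
   | LSlot L \<Rightarrow> (case L of ((X,\<gamma>),k) \<Rightarrow>
      if k < length \<gamma> then
        (let L' = ((X,\<gamma>), Suc k) in
         case \<gamma> ! k of
           T a \<Rightarrow>
             (let Js = {j. (i,a,j) \<in> E} in
              (addDs {(LSlot L', u, j, fst (getNodeP G L' w (TNode i a j))) | j. j \<in> Js}
                 (addSPPF ({TNode i a j | j. j \<in> Js} \<union> {fst (getNodeP G L' w (TNode i a j)) | j. j \<in> Js})
                          (\<Union>j\<in>Js. snd (getNodeP G L' w (TNode i a j))) st),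
               1 + outdeg E i))
         | NT Y \<Rightarrow>
             (let v = GNode L' i;
                  D2 = {(LSlot s, v, i, Dummy) | s. \<exists>e. (e,s) \<in> tslots G E i Y};
                  c2 = outdeg E i + card (tslots G E i Y) in
              if (v,w,u) \<in> GE st then (addDs D2 st, 1 + c2)
              else
                (let zs = {z. (v,z) \<in> Pset st} in
                 (addDs D2
                   (addDs {(LSlot L', u, rext z, fst (getNodeP G L' w z)) | z. z \<in> zs}
                     (addSPPF {fst (getNodeP G L' w z) | z. z \<in> zs}
                              (\<Union>z\<in>zs. snd (getNodeP G L' w z))
                              (st\<lparr>GE := insert (v,w,u) (GE st)\<rparr>))),
                  1 + card zs + c2))))
      else if \<gamma> = [] then
        (let y = getNodeP G L w (ENode i);
             r = popS G u i (fst y) (addSPPF {ENode i, fst y} (snd y) st) in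
         (fst r, 1 + snd r))
      else popS G u i w st)))"

definition init :: "'v set \<Rightarrow> ('n,'t,'v) gstate" where
  "init Vs = \<lparr>R = {(LStart, U0, v, Dummy) | v. v \<in> Vs}, U = {(LStart, U0, v, Dummy) | v. v \<in> Vs},
              Pset = {}, GE = {}, SN = {}, SP = {}\<rparr>"

inductive runs :: "('n,'t) cfg \<Rightarrow> ('v \<times> 't \<times> 'v) set \<Rightarrow> ('n,'t,'v) gstate \<Rightarrow> nat \<Rightarrow> ('n,'t,'v) gstate \<Rightarrow> bool"
  for G E where
  runs_refl: "runs G E st 0 st"
| runs_step: "runs G E st c st' \<Longrightarrow> d \<in> R st' \<Longrightarrow> process G E d (st'\<lparr>R := R st' - {d}\<rparr>) = (st'', c')
     \<Longrightarrow> runs G E st (c + c') st''"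

end

theory Submission
  imports Defs
begin

text \<open>
  Each descriptor enters R at most once, so the running time is at most the number of descriptors
  ever created times the cost of processing one of them. An SPPF node is determined by its label and
  its two extents, and in a descriptor (L, u, i, w) the GSS node u sits at the left extent of w (or
  at i if w is the dummy node); hence a descriptor is determined by L, the slot of u, and either i or
  w, and there are O(|V|^2) of them. Processing one descriptor costs O(|V| * maxdeg): the parse-table
  lookups cost O(out-degree), while a pop iterates over the GSS edges leaving one node and a call over
  the nodes popped at one GSS node; both are determined by a slot and an SPPF node with one extent
  fixed, so there are O(|V|) of them.
\<close>

definition slots :: "('n,'t) cfg \<Rightarrow> ('n,'t) slot set" where
  "slots G = {(p,k). p \<in> Prods G \<and> k \<le> length (snd p)}"

lemma finite_slots:
  assumes "cfg_wf G"
  shows "finite (slots G)"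
proof -
  have "slots G = (\<Union>p\<in>Prods G. (\<lambda>k. (p,k)) ` {..length (snd p)})"
    unfolding slots_def by auto
  then show ?thesis
    using assms by (simp add: cfg_wf_def)
qed

lemma card_option_slots:
  assumes "cfg_wf G"
  shows "card (insert None (Some ` slots G)) = 1 + card (slots G)"
  using finite_slots[OF assms] by (simp add: card_image)

fun gss_slot :: "('n,'t,'v) gss \<Rightarrow> ('n,'t) slot option" where
  "gss_slot U0 = None"
| "gss_slot (GNode L _) = Some L"

definition gss_at :: "('n,'t) cfg \<Rightarrow> 'v \<Rightarrow> ('n,'t,'v) gss \<Rightarrow> bool" where
  "gss_at G m u \<longleftrightarrow> u = U0 \<or> (\<exists>L\<in>slots G. u = GNode L m)"

lemma gss_at_U0 [simp]: "gss_at G m U0"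
  by (simp add: gss_at_def)

lemma gss_at_GNode [simp]: "gss_at G m (GNode L k) \<longleftrightarrow> L \<in> slots G \<and> k = m"
  by (auto simp: gss_at_def)

lemma gss_at_eqI: "gss_at G m u \<Longrightarrow> gss_at G m u' \<Longrightarrow> gss_slot u = gss_slot u' \<Longrightarrow> u = u'"
  by (auto simp: gss_at_def)

lemma gss_slot_mem: "gss_at G m u \<Longrightarrow> gss_slot u \<in> insert None (Some ` slots G)"
  by (auto simp: gss_at_def)

fun sppf_wf :: "('n,'t) cfg \<Rightarrow> 'v set \<Rightarrow> ('n,'t,'v) sppf \<Rightarrow> bool" where
  "sppf_wf G V Dummy \<longleftrightarrow> False"
| "sppf_wf G V (TNode a t b) \<longleftrightarrow> a \<in> V \<and> t \<in> Tms G \<and> b \<in> V"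
| "sppf_wf G V (ENode a) \<longleftrightarrow> a \<in> V"
| "sppf_wf G V (NNode a X b) \<longleftrightarrow> a \<in> V \<and> X \<in> Nts G \<and> b \<in> V"
| "sppf_wf G V (INode a L b) \<longleftrightarrow> a \<in> V \<and> L \<in> slots G \<and> b \<in> V"

lemma sppf_wf_extents: "sppf_wf G V z \<Longrightarrow> z \<noteq> Dummy \<and> lext z \<in> V \<and> rext z \<in> V"
  by (cases z) auto

fun sppf_label :: "('n,'t,'v) sppf \<Rightarrow> ('t + 'n + ('n,'t) slot) option" where
  "sppf_label (TNode _ a _) = Some (Inl a)"
| "sppf_label (NNode _ X _) = Some (Inr (Inl X))"
| "sppf_label (INode _ L _) = Some (Inr (Inr L))"
| "sppf_label _ = None"

definition sppf_labels :: "('n,'t) cfg \<Rightarrow> ('t + 'n + ('n,'t) slot) option set" where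
  "sppf_labels G = insert None (Some ` (Tms G <+> Nts G <+> slots G))"

lemma finite_sppf_labels: "cfg_wf G \<Longrightarrow> finite (sppf_labels G)"
  using finite_slots[of G] by (simp add: sppf_labels_def cfg_wf_def finite_Plus)

lemma sppf_label_mem: "sppf_wf G V z \<Longrightarrow> sppf_label z \<in> sppf_labels G"
  by (cases z) (auto simp: sppf_labels_def)

lemma inj_on_sppf_key: "inj_on (\<lambda>z. (sppf_label z, lext z, rext z)) {z. z \<noteq> Dummy}"
proof (rule inj_onI)
  fix z z' :: "('n,'t,'v) sppf"
  assume "z \<in> {z. z \<noteq> Dummy}" "z' \<in> {z. z \<noteq> Dummy}"
    and "(sppf_label z, lext z, rext z) = (sppf_label z', lext z', rext z')"
  then show "z = z'" by (cases z; cases z') auto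
qed

lemma card_sppf_le:
  assumes wf: "cfg_wf G" and Z: "Z \<subseteq> {z. sppf_wf G V z}"
  shows "card Z \<le> card (sppf_labels G) * card (lext ` Z) * card (rext ` Z)"
proof (cases "finite Z")
  case True
  let ?key = "\<lambda>z. (sppf_label z, lext z, rext z)"
  have "inj_on ?key Z"
    using Z sppf_wf_extents by (auto intro: inj_on_subset[OF inj_on_sppf_key])
  moreover have "?key ` Z \<subseteq> sppf_labels G \<times> lext ` Z \<times> rext ` Z"
    using Z by (auto intro: sppf_label_mem)
  moreover have "finite (sppf_labels G \<times> lext ` Z \<times> rext ` Z)"
    using True finite_sppf_labels[OF wf] by simp
  ultimately have "card Z \<le> card (sppf_labels G \<times> lext ` Z \<times> rext ` Z)"
    by (rule card_inj_on_le)
  then show ?thesis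
    by (simp add: card_cartesian_product)
next
  case False
  then show ?thesis by simp
qed

lemma finite_sppf_wf:
  assumes wf: "cfg_wf G" and fin: "finite V"
  shows "finite {z. sppf_wf G V z}"
proof (rule finite_imageD)
  let ?key = "\<lambda>z. (sppf_label z, lext z, rext z)"
  show "inj_on ?key {z. sppf_wf G V z}"
    using sppf_wf_extents by (auto intro: inj_on_subset[OF inj_on_sppf_key])
  have "?key ` {z. sppf_wf G V z} \<subseteq> sppf_labels G \<times> V \<times> V"
    using sppf_wf_extents by (auto intro: sppf_label_mem)
  then show "finite (?key ` {z. sppf_wf G V z})"
    by (rule finite_subset) (simp add: fin finite_sppf_labels[OF wf])
qed

lemma card_sppf_anchored_le:
  assumes wf: "cfg_wf G" and fin: "finite V" and Z: "Z \<subseteq> {z. sppf_wf G V z}"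
    and anchored: "(\<forall>z\<in>Z. lext z = m) \<or> (\<forall>z\<in>Z. rext z = m)"
  shows "card Z \<le> card (sppf_labels G) * card V"
proof -
  have "lext ` Z \<subseteq> V" "rext ` Z \<subseteq> V"
    using Z sppf_wf_extents by auto
  then have l: "card (lext ` Z) \<le> card V" and r: "card (rext ` Z) \<le> card V"
    using fin by (simp_all add: card_mono)
  have "card (lext ` Z) * card (rext ` Z) \<le> card V"
    using anchored
  proof
    assume "\<forall>z\<in>Z. lext z = m"
    then have "card (lext ` Z) \<le> card {m}"
      by (intro card_mono) auto
    then show ?thesis
      using mult_le_mono[OF _ r, of "card (lext ` Z)" 1] by simp
  next
    assume "\<forall>z\<in>Z. rext z = m"
    then have "card (rext ` Z) \<le> card {m}"
      by (intro card_mono) auto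
    then show ?thesis
      using mult_le_mono[OF l, of "card (rext ` Z)" 1] by simp
  qed
  then have "card (sppf_labels G) * (card (lext ` Z) * card (rext ` Z)) \<le> card (sppf_labels G) * card V"
    by (rule mult_le_mono2)
  with card_sppf_le[OF wf Z] show ?thesis
    unfolding mult.assoc by (rule order.trans)
qed

lemma card_sppf_wf_le:
  assumes wf: "cfg_wf G" and fin: "finite V"
  shows "card {z. sppf_wf G V z} \<le> card (sppf_labels G) * card V ^ 2"
proof -
  let ?Nodes = "{z. sppf_wf G V z}"
  have "card ?Nodes \<le> card (sppf_labels G) * card (lext ` ?Nodes) * card (rext ` ?Nodes)"
    using card_sppf_le[OF wf] by blast
  also have "\<dots> \<le> card (sppf_labels G) * card V * card V"
    using sppf_wf_extents fin by (intro mult_le_mono order.refl card_mono) auto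
  finally show ?thesis
    by (simp add: power2_eq_square mult.assoc)
qed

text \<open>The node w spans from the vertex of the GSS node u to the current position i.\<close>

fun desc_wf :: "('n,'t) cfg \<Rightarrow> 'v set \<Rightarrow> ('n,'t,'v) desc \<Rightarrow> bool" where
  "desc_wf G V (LStart, u, i, w) \<longleftrightarrow> u = U0 \<and> w = Dummy \<and> i \<in> V"
| "desc_wf G V (LSlot L, u, i, w) \<longleftrightarrow> L \<in> slots G \<and> i \<in> V \<and> (snd L = 0 \<longleftrightarrow> w = Dummy) \<and>
     (if w = Dummy then gss_at G i u else sppf_wf G V w \<and> rext w = i \<and> gss_at G (lext w) u)"

text \<open>An edge leaving GNode (p, k+1) m stores the descriptor at slot (p, k) that was suspended when
  the nonterminal after its dot was called at m.\<close>

definition gss_edge_wf :: "('n,'t) cfg \<Rightarrow> 'v set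
    \<Rightarrow> ('n,'t,'v) gss \<times> ('n,'t,'v) sppf \<times> ('n,'t,'v) gss \<Rightarrow> bool" where
  "gss_edge_wf G V e \<longleftrightarrow> (case e of (g, w, v) \<Rightarrow>
     \<exists>p k m. g = GNode (p, Suc k) m \<and> k < length (snd p) \<and> desc_wf G V (LSlot (p, k), v, m, w))"

definition popped_wf :: "('n,'t) cfg \<Rightarrow> 'v set \<Rightarrow> ('n,'t,'v) gss \<times> ('n,'t,'v) sppf \<Rightarrow> bool" where
  "popped_wf G V uz \<longleftrightarrow> (case uz of (u, z) \<Rightarrow> sppf_wf G V z \<and> gss_at G (lext z) u)"

definition gll_inv :: "('n,'t) cfg \<Rightarrow> 'v set \<Rightarrow> ('n,'t,'v) gstate \<Rightarrow> bool" where
  "gll_inv G V st \<longleftrightarrow> R st \<subseteq> U st \<and> (\<forall>d\<in>U st. desc_wf G V d) \<and>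
     (\<forall>e\<in>GE st. gss_edge_wf G V e) \<and> (\<forall>p\<in>Pset st. popped_wf G V p)"

definition processed :: "('n,'t,'v) gstate \<Rightarrow> ('n,'t,'v) desc set" where
  "processed st = U st - R st"

lemma gll_inv_init: "Vs \<subseteq> V \<Longrightarrow> gll_inv G V (init Vs)"
  by (auto simp: gll_inv_def init_def)

lemma processed_init [simp]: "processed (init Vs) = {}"
  by (simp add: processed_def init_def)

lemma gll_inv_addSPPF [simp]: "gll_inv G V (addSPPF ns ps st) \<longleftrightarrow> gll_inv G V st"
  by (simp add: gll_inv_def addSPPF_def)

lemma processed_addSPPF [simp]: "processed (addSPPF ns ps st) = processed st"
  by (simp add: processed_def addSPPF_def)

lemma gll_inv_addDs: "gll_inv G V st \<Longrightarrow> \<forall>d\<in>D. desc_wf G V d \<Longrightarrow> gll_inv G V (addDs D st)"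
  by (auto simp: gll_inv_def addDs_def)

lemma processed_addDs: "processed st \<subseteq> processed (addDs D st)"
  by (auto simp: processed_def addDs_def)

lemma desc_wf_anchor:
  assumes "desc_wf G V (lb, u, i, w)"
  shows "gss_at G (if w = Dummy then i else lext w) u \<and> (w \<noteq> Dummy \<longrightarrow> sppf_wf G V w \<and> rext w = i)"
  using assms by (cases lb) (auto split: if_splits)

lemma desc_wf_getNodeP:
  assumes wf: "cfg_wf G" and d: "desc_wf G V (LSlot ((X,\<gamma>),k), u, i, w)" and k: "k < length \<gamma>"
    and z: "sppf_wf G V z" "lext z = i"
  shows "desc_wf G V (LSlot ((X,\<gamma>), Suc k), u, rext z, fst (getNodeP G ((X,\<gamma>), Suc k) w z))"
proof -
  have "(X,\<gamma>) \<in> Prods G"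
    using d by (simp add: slots_def)
  then have "X \<in> Nts G" and "((X,\<gamma>), Suc k) \<in> slots G"
    using wf k by (auto simp: cfg_wf_def slots_def)
  then show ?thesis
    using d z sppf_wf_extents unfolding getNodeP_def Let_def
    by (auto split: if_splits)
qed

definition desc_key :: "('n,'t,'v) desc \<Rightarrow> ('n,'t) lab \<times> ('n,'t) slot option \<times> ('v + ('n,'t,'v) sppf)" where
  "desc_key d = (case d of (lb, u, i, w) \<Rightarrow> (lb, gss_slot u, if w = Dummy then Inl i else Inr w))"

lemma inj_on_desc_key: "inj_on desc_key {d. desc_wf G V d}"
proof (rule inj_onI)
  fix d d' assume "d \<in> {d. desc_wf G V d}" "d' \<in> {d. desc_wf G V d}" and eq: "desc_key d = desc_key d'"
  obtain lb u i w lb' u' i' w' where d: "d = (lb, u, i, w)" and d': "d' = (lb', u', i', w')"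
    by (cases d, cases d') auto
  have "desc_wf G V (lb, u, i, w)" "desc_wf G V (lb', u', i', w')"
    using \<open>d \<in> _\<close> \<open>d' \<in> _\<close> unfolding d d' by simp_all
  then have a: "gss_at G (if w = Dummy then i else lext w) u" "w \<noteq> Dummy \<longrightarrow> rext w = i"
    and a': "gss_at G (if w' = Dummy then i' else lext w') u'" "w' \<noteq> Dummy \<longrightarrow> rext w' = i'"
    by (simp_all add: desc_wf_anchor)
  have "lb = lb'" "gss_slot u = gss_slot u'" "w = w'" "i = i'"
    using eq a(2) a'(2) unfolding d d' desc_key_def by (auto split: if_splits)
  then show "d = d'"
    using gss_at_eqI a(1) a'(1) unfolding d d' by auto
qed

lemma desc_key_mem:
  assumes d: "desc_wf G V d"
  shows "desc_key d \<in> insert LStart (LSlot ` slots G) \<times> insert None (Some ` slots G)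
                        \<times> (Inl ` V \<union> Inr ` {z. sppf_wf G V z})"
proof -
  obtain lb u i w where d_eq: "d = (lb, u, i, w)"
    by (cases d)
  have "lb \<in> insert LStart (LSlot ` slots G)" "i \<in> V"
    using d unfolding d_eq by (cases lb; simp)+
  moreover have "gss_slot u \<in> insert None (Some ` slots G)"
    using desc_wf_anchor[OF d[unfolded d_eq]] by (intro gss_slot_mem) blast
  moreover have "(if w = Dummy then Inl i else Inr w) \<in> Inl ` V \<union> Inr ` {z. sppf_wf G V z}"
    using desc_wf_anchor[OF d[unfolded d_eq]] \<open>i \<in> V\<close> by auto
  ultimately show ?thesis
    unfolding d_eq desc_key_def by simp
qed

lemma card_descs_le:
  fixes G :: "('n,'t) cfg" and V :: "'v set" and X :: "('n,'t,'v) desc set"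
  assumes wf: "cfg_wf G" and fin: "finite V" and X: "\<forall>d\<in>X. desc_wf G V d"
  shows "finite X \<and> card X \<le> (1 + card (slots G))\<^sup>2 * (card V + card (sppf_labels G) * card V ^ 2)"
proof -
  let ?Labs = "insert LStart (LSlot ` slots G)"
  let ?Nodes = "{z. sppf_wf G V z}"
  let ?Pos = "Inl ` V \<union> Inr ` ?Nodes"
  let ?Keys = "?Labs \<times> insert None (Some ` slots G) \<times> ?Pos"
  have inj: "inj_on desc_key X"
    using X by (blast intro: inj_on_subset[OF inj_on_desc_key])
  have sub: "desc_key ` X \<subseteq> ?Keys"
    using X desc_key_mem by blast
  have fin_nodes: "finite ?Nodes"
    using finite_sppf_wf[OF wf fin] .
  have fin_keys: "finite ?Keys"
    using finite_slots[OF wf] fin fin_nodes by simp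
  have labs: "card ?Labs = 1 + card (slots G)"
    using finite_slots[OF wf] by (subst card_insert_disjoint) (auto simp: card_image inj_on_def)
  have pos: "card ?Pos \<le> card V + card (sppf_labels G) * card V ^ 2"
  proof -
    have "card ?Pos \<le> card (Inl ` V :: ('v + ('n,'t,'v) sppf) set) + card (Inr ` ?Nodes :: ('v + ('n,'t,'v) sppf) set)"
      by (rule card_Un_le)
    also have "\<dots> \<le> card V + card ?Nodes"
      by (intro add_mono card_image_le fin fin_nodes)
    finally show ?thesis
      using card_sppf_wf_le[OF wf fin] by linarith
  qed
  have "card X \<le> card ?Keys"
    by (rule card_inj_on_le[OF inj sub fin_keys])
  also have "\<dots> = (1 + card (slots G))\<^sup>2 * card ?Pos"
    unfolding card_cartesian_product labs card_option_slots[OF wf] by (simp add: power2_eq_square algebra_simps)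
  also have "\<dots> \<le> (1 + card (slots G))\<^sup>2 * (card V + card (sppf_labels G) * card V ^ 2)"
    using pos by (rule mult_le_mono2)
  finally show ?thesis
    using finite_imageD[OF finite_subset[OF sub fin_keys] inj] by blast
qed

lemma gss_edge_wf_anchor:
  assumes "gss_edge_wf G V (GNode L m, w, v)"
  shows "gss_at G (if w = Dummy then m else lext w) v \<and> (w \<noteq> Dummy \<longrightarrow> sppf_wf G V w \<and> rext w = m)"
proof -
  obtain p k where "desc_wf G V (LSlot (p, k), v, m, w)"
    using assms unfolding gss_edge_wf_def by auto
  then show ?thesis
    by (rule desc_wf_anchor)
qed

lemma card_gss_edges_from_le:
  fixes G :: "('n,'t) cfg" and V :: "'v set"
  assumes wf: "cfg_wf G" and fin: "finite V" and Es: "\<forall>e\<in>Es. gss_edge_wf G V e"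
  shows "card {(w, v). (GNode L m, w, v) \<in> Es}
           \<le> (1 + card (sppf_labels G) * card V) * (1 + card (slots G))"
proof -
  let ?S = "{(w, v). (GNode L m, w, v) \<in> Es}"
  let ?W = "{z. sppf_wf G V z \<and> rext z = m}"
  let ?Slots = "insert None (Some ` slots G)"
  let ?key = "\<lambda>(w, v). (w :: ('n,'t,'v) sppf, gss_slot v)"
  have anchor: "gss_at G (if w = Dummy then m else lext w) v \<and> (w \<noteq> Dummy \<longrightarrow> sppf_wf G V w \<and> rext w = m)"
    if "(w, v) \<in> ?S" for w v
    using Es that by (intro gss_edge_wf_anchor) blast
  have fin_W: "finite ?W"
    by (rule finite_subset[OF _ finite_sppf_wf[OF wf fin]]) blast
  have "inj_on ?key ?S"
  proof (rule inj_onI)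
    fix x y assume "x \<in> ?S" "y \<in> ?S" "?key x = ?key y"
    then obtain w v v' where xy: "x = (w, v)" "y = (w, v')" and S: "(w, v) \<in> ?S" "(w, v') \<in> ?S"
      and slot: "gss_slot v = gss_slot v'"
      by (cases x, cases y) auto
    show "x = y"
      using gss_at_eqI[OF conjunct1[OF anchor[OF S(1)]] conjunct1[OF anchor[OF S(2)]] slot] xy by simp
  qed
  moreover have "?key ` ?S \<subseteq> insert Dummy ?W \<times> ?Slots"
  proof
    fix x assume "x \<in> ?key ` ?S"
    then obtain w v where x: "x = (w, gss_slot v)" and S: "(w, v) \<in> ?S"
      by auto
    show "x \<in> insert Dummy ?W \<times> ?Slots"
      using anchor[OF S] gss_slot_mem[of G _ v] unfolding x by auto
  qed
  moreover have "finite (insert Dummy ?W \<times> ?Slots)"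
    using fin_W finite_slots[OF wf] by simp
  ultimately have "card ?S \<le> card (insert Dummy ?W \<times> ?Slots)"
    by (rule card_inj_on_le)
  also have "\<dots> = card (insert Dummy ?W) * card ?Slots"
    by (rule card_cartesian_product)
  also have "\<dots> \<le> (1 + card (sppf_labels G) * card V) * (1 + card (slots G))"
  proof (intro mult_le_mono)
    show "card (insert Dummy ?W) \<le> 1 + card (sppf_labels G) * card V"
    proof -
      have "card ?W \<le> card (sppf_labels G) * card V"
        by (rule card_sppf_anchored_le[OF wf fin, of _ m]) auto
      then show ?thesis
        using fin_W by (simp add: card_insert_if)
    qed
    show "card ?Slots \<le> 1 + card (slots G)"
      using card_option_slots[OF wf] by simp
  qed
  finally show ?thesis .
qed

lemma gll_inv_insert_GE:
  "gll_inv G V st \<Longrightarrow> gss_edge_wf G V e \<Longrightarrow> gll_inv G V (st\<lparr>GE := insert e (GE st)\<rparr>)"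
  by (simp add: gll_inv_def)

lemma processed_update_GE [simp]: "processed (st\<lparr>GE := es\<rparr>) = processed st"
  by (simp add: processed_def)

lemma processed_update_Pset [simp]: "processed (st\<lparr>Pset := ps\<rparr>) = processed st"
  by (simp add: processed_def)

lemma popS_preserves_inv:
  assumes wf: "cfg_wf G" and I: "gll_inv G V st"
    and z: "sppf_wf G V z" "rext z = i" "gss_at G (lext z) u"
    and P: "popS G u i z st = (st', c)"
  shows "gll_inv G V st' \<and> processed st \<subseteq> processed st'"
proof (cases u)
  case U0
  then show ?thesis
    using P I by (auto simp: popS_def)
next
  case (GNode Lu k)
  let ?es = "{(w, v). (u, w, v) \<in> GE st}"
  let ?st1 = "st\<lparr>Pset := insert (u, z) (Pset st)\<rparr>"
  have st': "st' = addDs {(LSlot Lu, v, i, fst (getNodeP G Lu w z)) | w v. (w, v) \<in> ?es}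
                (addSPPF {fst (getNodeP G Lu w z) | w v. (w, v) \<in> ?es}
                         (\<Union>(w, v)\<in>?es. snd (getNodeP G Lu w z)) ?st1)"
    using P GNode by (simp add: popS_def Let_def)
  have k: "k = lext z"
    using z(3) GNode by simp
  have resumed: "desc_wf G V (LSlot Lu, v, i, fst (getNodeP G Lu w z))" if "(u, w, v) \<in> GE st" for w v
  proof -
    have "gss_edge_wf G V (u, w, v)"
      using I that by (simp add: gll_inv_def)
    then obtain X \<gamma> kk where Lu: "Lu = ((X, \<gamma>), Suc kk)" "kk < length \<gamma>"
      and d: "desc_wf G V (LSlot ((X, \<gamma>), kk), v, k, w)"
      using GNode unfolding gss_edge_wf_def by auto
    show ?thesis
      using desc_wf_getNodeP[OF wf d Lu(2) z(1)] k z(2) Lu(1) by simp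
  qed
  have "gll_inv G V ?st1"
    using I z GNode by (simp add: gll_inv_def popped_wf_def)
  moreover have "\<forall>d\<in>{(LSlot Lu, v, i, fst (getNodeP G Lu w z)) | w v. (w, v) \<in> ?es}. desc_wf G V d"
    using resumed by blast
  ultimately have "gll_inv G V st'"
    unfolding st' by (simp add: gll_inv_addDs)
  moreover have "processed st \<subseteq> processed st'"
    unfolding st' by (rule order_trans[OF _ processed_addDs]) simp
  ultimately show ?thesis ..
qed

lemma popS_cost_le:
  assumes wf: "cfg_wf G" and fin: "finite V" and GE: "\<forall>e\<in>GE st. gss_edge_wf G V e"
    and P: "popS G u i z st = (st', c)"
  shows "c \<le> 1 + (1 + card (sppf_labels G) * card V) * (1 + card (slots G))"
proof (cases u)
  case U0
  then show ?thesis
    using P by (simp add: popS_def)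
next
  case (GNode L m)
  then have "c = 1 + card {(w, v). (GNode L m, w, v) \<in> GE st}"
    using P by (simp add: popS_def Let_def)
  then show ?thesis
    using card_gss_edges_from_le[OF wf fin GE] by simp
qed

lemma outdeg_le_maxdeg: "finite V \<Longrightarrow> i \<in> V \<Longrightarrow> outdeg E i \<le> max 1 (maxdeg V E)"
  unfolding maxdeg_def by (simp add: le_max_iff_disj)

lemma card_tslots_le:
  assumes "finite E" "finite (slots G)"
  shows "card (tslots G E i Y) \<le> outdeg E i * card (slots G)"
proof -
  have "tslots G E i Y \<subseteq> outE E i \<times> slots G"
    by (auto simp: tslots_def table_def slots_def)
  moreover have "finite (outE E i)"
    using assms(1) unfolding outE_def by simp
  ultimately have "card (tslots G E i Y) \<le> card (outE E i \<times> slots G)"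
    using assms(2) by (intro card_mono) auto
  then show ?thesis
    by (simp add: card_cartesian_product outdeg_def)
qed

lemma tslots_desc_wf:
  "(e, s) \<in> tslots G E i Y \<Longrightarrow> i \<in> V \<Longrightarrow> gss_at G i v \<Longrightarrow> desc_wf G V (LSlot s, v, i, Dummy)"
  by (auto simp: tslots_def table_def slots_def)

definition step_cost_bound :: "('n,'t) cfg \<Rightarrow> nat \<Rightarrow> nat \<Rightarrow> nat" where
  "step_cost_bound G n D =
     2 + (1 + card (sppf_labels G) * n) * (2 + card (slots G)) + D * (1 + card (slots G))"

definition step_sound :: "('n,'t) cfg \<Rightarrow> 'v set \<Rightarrow> ('v \<times> 't \<times> 'v) set
    \<Rightarrow> ('n,'t,'v) gstate \<Rightarrow> ('n,'t,'v) gstate \<Rightarrow> nat \<Rightarrow> bool" where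
  "step_sound G V E st st' c \<longleftrightarrow> gll_inv G V st' \<and> processed st \<subseteq> processed st' \<and>
     c \<le> step_cost_bound G (card V) (max 1 (maxdeg V E))"

lemma le_step_cost_boundI:
  "x \<le> 1 + card (sppf_labels G) * n + D * (1 + card (slots G)) \<Longrightarrow> x \<le> step_cost_bound G n D"
  "x \<le> 2 + (1 + card (sppf_labels G) * n) * (1 + card (slots G)) \<Longrightarrow> x \<le> step_cost_bound G n D"
  unfolding step_cost_bound_def by (simp_all add: algebra_simps)

context
  fixes G :: "('n,'t) cfg" and V :: "'v set" and E :: "('v \<times> 't \<times> 'v) set"
  assumes wf: "cfg_wf G" and fin: "finite V" and E_sub: "E \<subseteq> V \<times> Tms G \<times> V"
begin

lemma call_cost_le:
  assumes "i \<in> V"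
  shows "outdeg E i + card (tslots G E i Y) \<le> max 1 (maxdeg V E) * (1 + card (slots G))"
proof -
  have "finite E"
    using fin wf by (intro finite_subset[OF E_sub]) (simp add: cfg_wf_def)
  then have "card (tslots G E i Y) \<le> outdeg E i * card (slots G)"
    by (rule card_tslots_le[OF _ finite_slots[OF wf]])
  moreover have deg: "outdeg E i \<le> max 1 (maxdeg V E)"
    using outdeg_le_maxdeg[OF fin assms] .
  moreover have "outdeg E i * card (slots G) \<le> max 1 (maxdeg V E) * card (slots G)"
    using deg by (rule mult_le_mono1)
  ultimately show ?thesis
    unfolding distrib_left mult_1_right by linarith
qed

lemma process_start_sound:
  assumes I: "gll_inv G V st" and d: "desc_wf G V (LStart, u, i, w)"
    and P: "process G E (LStart, u, i, w) st = (st', c)"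
  shows "step_sound G V E st st' c"
proof -
  let ?D = "{(LSlot s, U0, i, Dummy) | s. \<exists>e. (e, s) \<in> tslots G E i (Start G)}"
  have st': "st' = addDs ?D st" and c: "c = 1 + (outdeg E i + card (tslots G E i (Start G)))"
    using P by (simp_all add: process_def)
  have "i \<in> V"
    using d by simp
  then have "\<forall>d\<in>?D. desc_wf G V d"
    using tslots_desc_wf[of _ _ G E i "Start G" V U0] by auto
  then have "gll_inv G V st'"
    unfolding st' using I by (simp add: gll_inv_addDs)
  moreover have "c \<le> step_cost_bound G (card V) (max 1 (maxdeg V E))"
    using call_cost_le[OF \<open>i \<in> V\<close>, of "Start G"] unfolding c step_cost_bound_def by linarith
  ultimately show ?thesis
    unfolding step_sound_def st' using processed_addDs[of st ?D] by blast
qed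

lemma process_terminal_sound:
  assumes I: "gll_inv G V st" and d: "desc_wf G V (LSlot ((X, \<gamma>), k), u, i, w)"
    and k: "k < length \<gamma>" and a: "\<gamma> ! k = T a"
    and P: "process G E (LSlot ((X, \<gamma>), k), u, i, w) st = (st', c)"
  shows "step_sound G V E st st' c"
proof -
  let ?L' = "((X, \<gamma>), Suc k)"
  let ?Js = "{j. (i, a, j) \<in> E}"
  let ?D = "{(LSlot ?L', u, j, fst (getNodeP G ?L' w (TNode i a j))) | j. j \<in> ?Js}"
  let ?ns = "{TNode i a j | j. j \<in> ?Js} \<union> {fst (getNodeP G ?L' w (TNode i a j)) | j. j \<in> ?Js}"
  let ?ps = "\<Union>j\<in>?Js. snd (getNodeP G ?L' w (TNode i a j))"
  have "process G E (LSlot ((X, \<gamma>), k), u, i, w) st = (addDs ?D (addSPPF ?ns ?ps st), 1 + outdeg E i)"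
    unfolding process_def using k a by (simp only: Let_def lab.case prod.case sym.case if_True)
  then have st': "st' = addDs ?D (addSPPF ?ns ?ps st)" and c: "c = 1 + outdeg E i"
    using P by simp_all
  have "desc_wf G V d'" if new: "d' \<in> ?D" for d'
  proof -
    obtain j where d': "d' = (LSlot ?L', u, j, fst (getNodeP G ?L' w (TNode i a j)))" and "(i, a, j) \<in> E"
      using new by blast
    then have "sppf_wf G V (TNode i a j)"
      using E_sub by auto
    then show ?thesis
      using desc_wf_getNodeP[OF wf d k, of "TNode i a j"] d' by simp
  qed
  then have "gll_inv G V st'"
    unfolding st' using I by (simp add: gll_inv_addDs)
  moreover have "processed st \<subseteq> processed st'"
    unfolding st' using processed_addDs[of "addSPPF ?ns ?ps st" ?D] by simp
  moreover have "c \<le> step_cost_bound G (card V) (max 1 (maxdeg V E))"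
    using d outdeg_le_maxdeg[OF fin, of i E] unfolding c by (intro le_step_cost_boundI) auto
  ultimately show ?thesis
    unfolding step_sound_def by blast
qed

lemma process_call_sound:
  assumes I: "gll_inv G V st" and d: "desc_wf G V (LSlot ((X, \<gamma>), k), u, i, w)"
    and k: "k < length \<gamma>" and Y: "\<gamma> ! k = NT Y"
    and P: "process G E (LSlot ((X, \<gamma>), k), u, i, w) st = (st', c)"
  shows "step_sound G V E st st' c"
proof -
  let ?L' = "((X, \<gamma>), Suc k)"
  let ?v = "GNode ?L' i"
  let ?D = "{(LSlot s, ?v, i, Dummy) | s. \<exists>e. (e, s) \<in> tslots G E i Y}"
  let ?c = "outdeg E i + card (tslots G E i Y)"
  have i: "i \<in> V" and L': "?L' \<in> slots G"
    using d k by (auto simp: slots_def)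
  obtain st1 where st': "st' = addDs ?D st1" and I1: "gll_inv G V st1"
    and processed1: "processed st \<subseteq> processed st1" and c: "c \<le> 1 + card (sppf_labels G) * card V + ?c"
  proof (cases "(?v, w, u) \<in> GE st")
    case True
    then have "process G E (LSlot ((X, \<gamma>), k), u, i, w) st = (addDs ?D st, 1 + ?c)"
      unfolding process_def using k Y by (simp only: Let_def lab.case prod.case sym.case if_True)
    then show ?thesis
      using P I that[of st] by simp
  next
    case False
    let ?zs = "{z. (?v, z) \<in> Pset st}"
    let ?D1 = "{(LSlot ?L', u, rext z, fst (getNodeP G ?L' w z)) | z. z \<in> ?zs}"
    let ?ns = "{fst (getNodeP G ?L' w z) | z. z \<in> ?zs}"
    let ?ps = "\<Union>z\<in>?zs. snd (getNodeP G ?L' w z)"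
    let ?st0 = "st\<lparr>GE := insert (?v, w, u) (GE st)\<rparr>"
    have "process G E (LSlot ((X, \<gamma>), k), u, i, w) st
            = (addDs ?D (addDs ?D1 (addSPPF ?ns ?ps ?st0)), 1 + card ?zs + ?c)"
      unfolding process_def using k Y False
      by (simp only: Let_def lab.case prod.case sym.case if_True if_False)
    then have st': "st' = addDs ?D (addDs ?D1 (addSPPF ?ns ?ps ?st0))" and c: "c = 1 + card ?zs + ?c"
      using P by simp_all
    have popped: "sppf_wf G V z \<and> lext z = i" if "z \<in> ?zs" for z
      using I that by (auto simp: gll_inv_def popped_wf_def)
    have "gss_edge_wf G V (?v, w, u)"
      using d k unfolding gss_edge_wf_def by auto
    then have "gll_inv G V ?st0"
      using I by (rule gll_inv_insert_GE[rotated])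
    moreover have "\<forall>d\<in>?D1. desc_wf G V d"
      using popped desc_wf_getNodeP[OF wf d k] by blast
    ultimately have "gll_inv G V (addDs ?D1 (addSPPF ?ns ?ps ?st0))"
      by (simp add: gll_inv_addDs)
    moreover have "processed st \<subseteq> processed (addDs ?D1 (addSPPF ?ns ?ps ?st0))"
      using processed_addDs[of "addSPPF ?ns ?ps ?st0" ?D1] by simp
    moreover have "card ?zs \<le> card (sppf_labels G) * card V"
      using popped by (intro card_sppf_anchored_le[OF wf fin, of _ i]) auto
    ultimately show ?thesis
      using that st' c by simp
  qed
  have "\<forall>d\<in>?D. desc_wf G V d"
    using tslots_desc_wf[of _ _ G E i Y V ?v] i L' by auto
  then have "gll_inv G V st'"
    unfolding st' using I1 by (simp add: gll_inv_addDs)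
  moreover have "processed st \<subseteq> processed st'"
    unfolding st' using processed1 processed_addDs[of st1 ?D] by blast
  moreover have "c \<le> step_cost_bound G (card V) (max 1 (maxdeg V E))"
    using c call_cost_le[OF i, of Y] by (intro le_step_cost_boundI) linarith
  ultimately show ?thesis
    unfolding step_sound_def by blast
qed

lemma process_pop_sound:
  assumes I: "gll_inv G V st" and d: "desc_wf G V (LSlot ((X, \<gamma>), k), u, i, w)"
    and k: "\<not> k < length \<gamma>"
    and P: "process G E (LSlot ((X, \<gamma>), k), u, i, w) st = (st', c)"
  shows "step_sound G V E st st' c"
proof -
  have pop_cost: "c' \<le> 1 + (1 + card (sppf_labels G) * card V) * (1 + card (slots G))"
    if "gll_inv G V st0" "popS G u i z st0 = (st', c')" for st0 z c'
    using popS_cost_le[OF wf fin _ that(2)] that(1) by (simp add: gll_inv_def)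
  have "k = length \<gamma>"
    using d k by (simp add: slots_def)
  show ?thesis
  proof (cases "\<gamma> = []")
    case True
    then have "k = 0" "w = Dummy" "(X, []) \<in> Prods G"
      using d \<open>k = length \<gamma>\<close> by (simp_all add: slots_def)
    then have y: "fst (getNodeP G ((X, \<gamma>), k) w (ENode i)) = NNode i X i"
      using True by (simp add: getNodeP_def Let_def)
    let ?st0 = "addSPPF {ENode i, NNode i X i} (snd (getNodeP G ((X, []), 0) w (ENode i))) st"
    have "fst (popS G u i (NNode i X i) ?st0) = st'" "1 + snd (popS G u i (NNode i X i) ?st0) = c"
      using P True y \<open>k = 0\<close> by (simp_all add: process_def Let_def)
    then obtain c' where popS: "popS G u i (NNode i X i) ?st0 = (st', c')" and c: "c = 1 + c'"
      by (metis prod.collapse)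
    have "sppf_wf G V (NNode i X i)" "gss_at G i u"
      using d wf \<open>(X, []) \<in> Prods G\<close> \<open>w = Dummy\<close> by (auto simp: cfg_wf_def)
    then have "gll_inv G V st' \<and> processed st \<subseteq> processed st'"
      using popS_preserves_inv[OF wf _ _ _ _ popS] I by simp
    moreover have "c \<le> step_cost_bound G (card V) (max 1 (maxdeg V E))"
      using pop_cost[OF _ popS] I unfolding c by (intro le_step_cost_boundI) simp
    ultimately show ?thesis
      unfolding step_sound_def by blast
  next
    case False
    then have popS: "popS G u i w st = (st', c)"
      using P k by (simp add: process_def)
    have "w \<noteq> Dummy"
      using d False \<open>k = length \<gamma>\<close> by simp
    then have "sppf_wf G V w" "rext w = i" "gss_at G (lext w) u"
      using d by simp_all
    then have "gll_inv G V st' \<and> processed st \<subseteq> processed st'"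
      using popS_preserves_inv[OF wf I _ _ _ popS] by simp
    moreover have "c \<le> step_cost_bound G (card V) (max 1 (maxdeg V E))"
      using pop_cost[OF I popS] by (intro le_step_cost_boundI) simp
    ultimately show ?thesis
      unfolding step_sound_def by blast
  qed
qed

lemma process_step_sound:
  assumes I: "gll_inv G V st" and d: "desc_wf G V d" and P: "process G E d st = (st', c)"
  shows "step_sound G V E st st' c"
proof -
  obtain lb u i w where d_eq: "d = (lb, u, i, w)"
    by (cases d)
  show ?thesis
  proof (cases lb)
    case LStart
    then show ?thesis
      using process_start_sound I d P unfolding d_eq by blast
  next
    case (LSlot L)
    obtain X \<gamma> k where L: "L = ((X, \<gamma>), k)"
      by (cases L) auto
    consider (terminal) a where "k < length \<gamma>" "\<gamma> ! k = T a"
      | (call) Y where "k < length \<gamma>" "\<gamma> ! k = NT Y"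
      | (pop) "\<not> k < length \<gamma>"
      by (metis sym.exhaust)
    then show ?thesis
      using I d P unfolding d_eq LSlot L
      by cases (blast intro: process_terminal_sound process_call_sound process_pop_sound)+
  qed
qed

lemma runs_cost_le:
  assumes "runs G E st0 c st" and "gll_inv G V st0"
  shows "gll_inv G V st \<and>
    step_cost_bound G (card V) (max 1 (maxdeg V E)) * card (processed st0) + c
      \<le> step_cost_bound G (card V) (max 1 (maxdeg V E)) * card (processed st)"
  using assms
proof (induction rule: runs.induct)
  case (runs_refl st)
  then show ?case by simp
next
  case (runs_step st0 c st d st' c')
  let ?K = "step_cost_bound G (card V) (max 1 (maxdeg V E))"
  let ?s = "st\<lparr>R := R st - {d}\<rparr>"
  have I: "gll_inv G V st" and cost: "?K * card (processed st0) + c \<le> ?K * card (processed st)"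
    using runs_step.IH runs_step.prems by blast+
  have "d \<in> U st"
    using I runs_step.hyps(2) by (auto simp: gll_inv_def)
  then have "gll_inv G V ?s" and "desc_wf G V d" and processed_s: "processed ?s = insert d (processed st)"
    using I by (auto simp: gll_inv_def processed_def)
  then have step: "step_sound G V E ?s st' c'"
    using process_step_sound runs_step.hyps(3) by blast
  then have fin': "finite (processed st')"
    using card_descs_le[OF wf fin, of "U st'"] unfolding step_sound_def gll_inv_def processed_def by auto
  have sub: "insert d (processed st) \<subseteq> processed st'"
    using step processed_s unfolding step_sound_def by simp
  have "d \<notin> processed st"
    using runs_step.hyps(2) by (simp add: processed_def)
  then have "card (processed st) + 1 = card (insert d (processed st))"
    using finite_subset[OF sub fin'] by simp
  also have "\<dots> \<le> card (processed st')"
    by (rule card_mono[OF fin' sub])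
  finally have "card (processed st) + 1 \<le> card (processed st')" .
  then have "?K * (card (processed st) + 1) \<le> ?K * card (processed st')"
    by (rule mult_le_mono2)
  then show ?case
    using step cost unfolding step_sound_def by (simp add: algebra_simps)
qed

end

lemma gll_cost_polynomial_le:
  fixes n D s l :: nat
  assumes D: "D \<ge> 1"
  shows "(2 + (1 + l * n) * (2 + s) + D * (1 + s)) * ((1 + s)\<^sup>2 * (n + l * n\<^sup>2))
           \<le> (2 + (1 + l) * (2 + s) + (1 + s)) * (1 + s)\<^sup>2 * (1 + l) * (n ^ 3 * D)"
proof (cases "n = 0")
  case False
  then have n: "n \<ge> 1" by simp
  have "2 + (1 + l * n) * (2 + s) + D * (1 + s) \<le> n * D * (2 + (1 + l) * (2 + s) + (1 + s))"
  proof -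
    have "1 + l * n \<le> n * (1 + l)"
      using n by (simp add: algebra_simps)
    then have "(1 + l * n) * (2 + s) \<le> n * D * ((1 + l) * (2 + s))"
      using n D by (metis mult.assoc mult.commute mult_le_mono mult_le_mono1 nat_mult_1)
    moreover have "1 * (D * (1 + s)) \<le> n * (D * (1 + s))" "1 * 2 \<le> (n * D) * 2"
      using n D by (intro mult_le_mono1; simp)+
    ultimately show ?thesis
      by (simp add: algebra_simps)
  qed
  moreover have "(1 + s)\<^sup>2 * (n + l * n\<^sup>2) \<le> (1 + s)\<^sup>2 * (1 + l) * n\<^sup>2"
  proof -
    have "n \<le> n\<^sup>2"
      using n by (simp add: power2_eq_square)
    then have "n + l * n\<^sup>2 \<le> (1 + l) * n\<^sup>2"
      by simp
    then show ?thesis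
      unfolding mult.assoc by (rule mult_le_mono2)
  qed
  ultimately have "(2 + (1 + l * n) * (2 + s) + D * (1 + s)) * ((1 + s)\<^sup>2 * (n + l * n\<^sup>2))
      \<le> (n * D * (2 + (1 + l) * (2 + s) + (1 + s))) * ((1 + s)\<^sup>2 * (1 + l) * n\<^sup>2)"
    by (rule mult_le_mono)
  then show ?thesis
    by (simp add: power2_eq_square power3_eq_cube algebra_simps)
qed simp

theorem theorem4:
  fixes G :: "('n,'t) cfg"
  assumes "cfg_wf G"
  shows "\<exists>C::real. \<forall>(V::'v set) (E::('v \<times> 't \<times> 'v) set) Vs Vf c st.
           finite V \<and> E \<subseteq> V \<times> Tms G \<times> V \<and> Vs \<subseteq> V \<and> Vf \<subseteq> V \<and>
           runs G E (init Vs) c st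
           \<longrightarrow> real c \<le> C * real (card V) ^ 3 * real (max 1 (maxdeg V E))"
proof -
  let ?s = "card (slots G)" and ?l = "card (sppf_labels G)"
  let ?C = "(2 + (1 + ?l) * (2 + ?s) + (1 + ?s)) * (1 + ?s)\<^sup>2 * (1 + ?l)"
  show ?thesis
  proof (intro exI[of _ "real ?C"] allI impI, elim conjE)
    fix V :: "'v set" and E :: "('v \<times> 't \<times> 'v) set" and Vs Vf c and st :: "('n,'t,'v) gstate"
    assume fin: "finite V" and E_sub: "E \<subseteq> V \<times> Tms G \<times> V" and "Vs \<subseteq> V"
      and run: "runs G E (init Vs) c st"
    let ?n = "card V" and ?D = "max 1 (maxdeg V E)"
    have inv: "gll_inv G V st" and "c \<le> step_cost_bound G ?n ?D * card (processed st)"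
      using runs_cost_le[OF assms fin E_sub run gll_inv_init[OF \<open>Vs \<subseteq> V\<close>]] by simp_all
    moreover have "card (processed st) \<le> (1 + ?s)\<^sup>2 * (?n + ?l * ?n\<^sup>2)"
      using card_descs_le[OF assms fin, of "U st"] inv
      by (auto simp: gll_inv_def processed_def intro: card_mono[THEN order_trans])
    ultimately have "c \<le> step_cost_bound G ?n ?D * ((1 + ?s)\<^sup>2 * (?n + ?l * ?n\<^sup>2))"
      by (meson mult_le_mono2 order_trans)
    also have "\<dots> \<le> ?C * (?n ^ 3 * ?D)"
      unfolding step_cost_bound_def by (rule gll_cost_polynomial_le) simp
    finally have "real c \<le> real (?C * (?n ^ 3 * ?D))"
      by (simp only: of_nat_le_iff)
    then show "real c \<le> real ?C * real ?n ^ 3 * real ?D"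
      by (simp only: of_nat_mult of_nat_power mult.assoc)
  qed
qed

end
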